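(* Let $n$ be a positive integer and let $i,j$ be integers with $1\leq i\leq j-2\leq n-2$. Then for all permutations $p$ of length $n$, $c_i(c_j(p))=c_j(c_i(p))$.
   Context: For a string $s$ of distinct integers with underlying set $S$, the complement of $s$ relative to $S$ is the string obtained from $s$ by replacing, for each $j$, the $j$th smallest element of $S$ by the $j$th largest element of $S$. For $1\leq i\leq n$, $c_i$ is the map on permutations $p=p_1p_2\cdots p_n$ of length $n$ that leaves $p_1\cdots p_{i-1}$ unchanged and replaces the string $p_ip_{i+1}\cdots p_n$ by its complement relative to its underlying set $\{p_i,\dots,p_n\}$. *)

theory Defs
  imports Main
begin

definition is_perm :: "nat \<Rightarrow> nat list \<Rightarrow> bool" where
  "is_perm n p \<longleftrightarrow> distinct p \<and> set p = {1..n}"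

text \<open>Complement of a string s of distinct integers relative to its underlying set S:
  the element with exactly r smaller elements in S (the (r+1)-th smallest) is replaced
  by the (r+1)-th largest element of S.\<close>
definition complement :: "nat list \<Rightarrow> nat list" where
  "complement s = (let L = sorted_list_of_set (set s); k = length L in
     map (\<lambda>x. L ! (k - 1 - card {y \<in> set s. y < x})) s)"

definition c_map :: "nat \<Rightarrow> nat list \<Rightarrow> nat list" where
  "c_map i p = take (i - 1) p @ complement (drop (i - 1) p)"

end

theory Submission
  imports Defs
begin

text \<open>The complement of a string s applies to each letter the order-reversing bijection
  order_reversal S of S = set s, which sends the element of rank r to the element of rank
  |S| - 1 - r. For T \<subseteq> S, writing \<rho> = order_reversal, the maps \<rho> S \<circ> \<rho> T and
  \<rho> (\<rho> S ` T) \<circ> \<rho> S are both order-preserving bijections from T onto \<rho> S ` T, hence equal.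
  Since c_j does not change the letter set of any suffix starting at a position i \<le> j, both
  c_i c_j and c_j c_i act as \<rho> S on the letters in positions i, ..., j - 1 and as these two
  equal maps on the later letters.\<close>

definition rank :: "nat set \<Rightarrow> nat \<Rightarrow> nat" where
  "rank S x = card {y \<in> S. y < x}"

definition order_reversal :: "nat set \<Rightarrow> nat \<Rightarrow> nat" where
  "order_reversal S x = sorted_list_of_set S ! (card S - 1 - rank S x)"

lemma complement_eq_map_order_reversal: "complement s = map (order_reversal (set s)) s"
  by (simp add: complement_def order_reversal_def rank_def Let_def)

lemma rank_less_card: "finite S \<Longrightarrow> x \<in> S \<Longrightarrow> rank S x < card S"
  unfolding rank_def by (rule psubset_card_mono) auto

lemma rank_strict_mono: "finite S \<Longrightarrow> x \<in> S \<Longrightarrow> x < y \<Longrightarrow> rank S x < rank S y"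
  unfolding rank_def by (rule psubset_card_mono) auto

lemma inj_on_rank: "finite S \<Longrightarrow> inj_on (rank S) S"
  by (rule linorder_inj_onI') (metis less_irrefl rank_strict_mono)

lemma card_greater_eq_rank_complement:
  assumes "finite S" "x \<in> S"
  shows "card {z \<in> S. x < z} = card S - 1 - rank S x"
proof -
  let ?below = "{z \<in> S. z < x}" and ?above = "{z \<in> S. x < z}"
  have "S = insert x (?below \<union> ?above)"
    using assms(2) by auto
  then have "card S = card (insert x (?below \<union> ?above))"
    by (rule arg_cong)
  also have "\<dots> = Suc (rank S x + card ?above)"
    using assms(1) by (simp add: rank_def card_Un_disjoint disjoint_iff)
  finally show ?thesis by simp
qed

lemma rank_antitone_bij:
  assumes "finite S" and bij: "bij_betw f S S'"
    and anti: "\<And>x y. x \<in> S \<Longrightarrow> y \<in> S \<Longrightarrow> x < y \<Longrightarrow> f y < f x"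
    and "x \<in> S"
  shows "rank S' (f x) = card S - 1 - rank S x"
proof -
  have "{y \<in> S'. y < f x} = f ` {z \<in> S. x < z}"
  proof (intro equalityI subsetI)
    fix y assume "y \<in> {y \<in> S'. y < f x}"
    then obtain z where "z \<in> S" "y = f z" "f z < f x"
      using bij by (auto simp: bij_betw_def)
    then have "x < z"
      using anti[of z x] \<open>x \<in> S\<close> by (cases x z rule: linorder_cases) auto
    then show "y \<in> f ` {z \<in> S. x < z}" using \<open>z \<in> S\<close> \<open>y = f z\<close> by auto
  qed (use assms bij_betwE in fastforce)
  moreover have "inj_on f {z \<in> S. x < z}"
    using bij by (auto simp: bij_betw_def intro: inj_on_subset)
  ultimately show ?thesis
    using card_greater_eq_rank_complement[OF assms(1,4)] by (simp add: rank_def card_image)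
qed

lemma order_reversal_in:
  assumes "finite S" "x \<in> S"
  shows "order_reversal S x \<in> S"
proof -
  have "card S > 0"
    using assms card_gt_0_iff by blast
  then have "card S - 1 - rank S x < length (sorted_list_of_set S)"
    using assms(1) by simp
  then have "order_reversal S x \<in> set (sorted_list_of_set S)"
    unfolding order_reversal_def by (rule nth_mem)
  then show ?thesis
    using assms(1) by simp
qed

lemma order_reversal_strict_antimono:
  assumes "finite S" "x \<in> S" "y \<in> S" "x < y"
  shows "order_reversal S y < order_reversal S x"
proof -
  have "rank S x < rank S y" "rank S y < card S"
    using rank_strict_mono rank_less_card assms by auto
  then show ?thesis
    unfolding order_reversal_def
    using sorted_wrt_nth_less[OF strict_sorted_list_of_set, of _ _ S] by simp
qed

lemma bij_betw_order_reversal: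
  assumes "finite S"
  shows "bij_betw (order_reversal S) S S"
proof -
  have inj: "inj_on (order_reversal S) S"
    by (rule linorder_inj_onI') (metis assms order_reversal_strict_antimono less_irrefl)
  moreover have "order_reversal S ` S \<subseteq> S"
    using order_reversal_in assms by auto
  ultimately have "order_reversal S ` S = S"
    using card_subset_eq[OF assms] card_image by metis
  with inj show ?thesis by (simp add: bij_betw_def)
qed

lemma rank_order_reversal:
  "finite S \<Longrightarrow> x \<in> S \<Longrightarrow> rank S (order_reversal S x) = card S - 1 - rank S x"
  by (rule rank_antitone_bij[OF _ bij_betw_order_reversal order_reversal_strict_antimono])

lemma order_reversal_image: "finite S \<Longrightarrow> order_reversal S ` S = S"
  using bij_betw_order_reversal by (simp add: bij_betw_def)

lemma order_reversal_conj:
  assumes "finite S" "T \<subseteq> S" "t \<in> T"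
  defines "T' \<equiv> order_reversal S ` T"
  shows "order_reversal S (order_reversal T t) = order_reversal T' (order_reversal S t)"
proof -
  have "finite T" using assms(1,2) finite_subset by blast
  have bij: "bij_betw (order_reversal S) T T'"
    unfolding T'_def using assms(1,2) bij_betw_order_reversal bij_betw_subset by blast
  have anti: "\<And>x y. x \<in> T \<Longrightarrow> y \<in> T \<Longrightarrow> x < y \<Longrightarrow> order_reversal S y < order_reversal S x"
    using order_reversal_strict_antimono assms(1,2) by blast
  have "finite T'"
    using \<open>finite T\<close> by (simp add: T'_def)
  have "card T' = card T"
    using bij_betw_same_card[OF bij] by simp
  have "order_reversal T t \<in> T"
    using order_reversal_in \<open>finite T\<close> assms(3) by blast
  have "order_reversal S t \<in> T'" "order_reversal S (order_reversal T t) \<in> T'"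
    using assms(3) \<open>order_reversal T t \<in> T\<close> by (simp_all add: T'_def)
  have "rank T' (order_reversal S (order_reversal T t)) = rank T t"
    using rank_antitone_bij[OF \<open>finite T\<close> bij anti \<open>order_reversal T t \<in> T\<close>]
      rank_order_reversal[OF \<open>finite T\<close> assms(3)] rank_less_card[OF \<open>finite T\<close> assms(3)]
    by simp
  also have "\<dots> = rank T' (order_reversal T' (order_reversal S t))"
    using rank_order_reversal[OF \<open>finite T'\<close> \<open>order_reversal S t \<in> T'\<close>]
      rank_antitone_bij[OF \<open>finite T\<close> bij anti assms(3)] \<open>card T' = card T\<close>
      rank_less_card[OF \<open>finite T\<close> assms(3)]
    by simp
  finally show ?thesis
    using inj_onD[OF inj_on_rank[OF \<open>finite T'\<close>]] order_reversal_in[OF \<open>finite T'\<close>]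
      \<open>order_reversal S t \<in> T'\<close> \<open>order_reversal S (order_reversal T t) \<in> T'\<close>
    by blast
qed

lemma complement_append_complement:
  fixes xs ys :: "nat list"
  defines "f \<equiv> order_reversal (set (xs @ ys))"
  shows "complement (xs @ complement ys) = map f xs @ complement (map f ys)"
proof -
  have "map (order_reversal (set (xs @ ys)) \<circ> order_reversal (set ys)) ys
      = map (order_reversal (f ` set ys) \<circ> f) ys"
    unfolding f_def by (intro map_cong refl) (simp add: order_reversal_conj)
  then show ?thesis
    by (simp add: complement_eq_map_order_reversal order_reversal_image f_def)
qed

lemma c_map_append: "i - 1 = length P \<Longrightarrow> c_map i (P @ xs) = P @ complement xs"
  by (simp add: c_map_def)

lemma c_map_beyond_length: "length p \<le> j - 1 \<Longrightarrow> c_map j p = p"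
  by (simp add: c_map_def complement_def)

lemma length_c_map: "length (c_map i p) = length p"
  by (simp add: c_map_def complement_def)

lemma c_map_commute:
  assumes "i \<le> j"
  shows "c_map i (c_map j p) = c_map j (c_map i p)"
proof (cases "j - 1 \<le> length p")
  case True
  define P where "P = take (i - 1) p"
  define B where "B = drop (i - 1) (take (j - 1) p)"
  define C where "C = drop (j - 1) p"
  define f where "f = order_reversal (set (B @ C))"
  have "take (j - 1) p = P @ B"
    unfolding P_def B_def using assms
    by (metis append_take_drop_id diff_le_mono min.absorb1 take_take)
  then have p: "p = P @ B @ C"
    unfolding C_def by (metis append.assoc append_take_drop_id)
  have i: "i - 1 = length P" and j: "j - 1 = length (P @ B)"
    using True assms \<open>take (j - 1) p = P @ B\<close> by (auto simp: P_def dest: arg_cong[of _ _ length])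
  have "c_map j p = P @ B @ complement C"
    using c_map_append[OF j] unfolding p by simp
  then have "c_map i (c_map j p) = P @ complement (B @ complement C)"
    using c_map_append[OF i] by simp
  also have "\<dots> = P @ map f B @ complement (map f C)"
    unfolding f_def by (rule arg_cong[OF complement_append_complement])
  also have "\<dots> = c_map j ((P @ map f B) @ map f C)"
    by (subst c_map_append) (use j in simp_all)
  also have "(P @ map f B) @ map f C = c_map i p"
    unfolding p using c_map_append[OF i] by (simp add: complement_eq_map_order_reversal f_def)
  finally show ?thesis .
qed (simp add: c_map_beyond_length length_c_map)

theorem mainTheorem2:
  fixes n i j :: nat and p :: "nat list"
  assumes "n \<ge> 1" and "1 \<le> i" and "i + 2 \<le> j" and "j \<le> n"
    and "is_perm n p"
  shows "c_map i (c_map j p) = c_map j (c_map i p)"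
  by (rule c_map_commute) (use assms(3) in simp)

end
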